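(* For $\ell=0,1,\ldots,N$, and real $x\in\mathbb{R}^N$, $y\in\mathbb{R}^{N-\ell}$ with pairwise distinct coordinates, $$\big(H_{\rm nr}(x_1,\ldots,x_N)-H_{\rm nr}(y_1,\ldots,y_{N-\ell})\big)\Psi_{\ell,\rm nr}(x,y)=-\frac{\mu^2g^2}{24}\ell(4\ell^2-1)\Psi_{\ell,\rm nr}(x,y),$$ where $\Psi_{\ell,\rm nr}(x,y)=W_{\rm nr}(x)^{1/2}W_{\rm nr}(y)^{1/2}\mathcal{K}_\ell(x,y)$ and $$\mathcal{K}_\ell(x,y)=\frac{\exp\big(\frac{\mu g\ell}{2\hbar}\big(\sum_{n=1}^{N-\ell}y_n-\sum_{m=1}^Nx_m\big)\big)}{\prod_{m=1}^N\prod_{n=1}^{N-\ell}[2\cosh(\mu(x_m-y_n)/2)]^{g/\hbar}}.$$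
   Context: Fix $\hbar,\mu,g>0$. For $n$ variables, $H_{\rm nr}(x_1,\ldots,x_n)=-\frac{\hbar^2}{2}\sum_{j=1}^n\partial_{x_j}^2+g(g-\hbar)\sum_{1\le j<l\le n}\frac{\mu^2}{4\sinh^2(\mu(x_j-x_l)/2)}$ (for $n=0$ this is $0$), and $W_{\rm nr}(x)^{1/2}=\prod_{1\le j<k\le n}\big(4\sinh^2(\mu(x_j-x_k)/2)\big)^{g/(2\hbar)}$ with positive real powers. *)

theory Defs
  imports "HOL-Analysis.Analysis"
begin

text \<open>Points of R^n are represented as functions nat => real; only the
coordinates 0..n-1 (i.e. indices < n) are relevant.\<close>

definition partial2 :: "((nat \<Rightarrow> real) \<Rightarrow> real) \<Rightarrow> (nat \<Rightarrow> real) \<Rightarrow> nat \<Rightarrow> real" where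
  "partial2 f x j = deriv (\<lambda>t. deriv (\<lambda>s. f (x(j := s))) t) (x j)"

definition H_nr :: "real \<Rightarrow> real \<Rightarrow> real \<Rightarrow> nat \<Rightarrow> ((nat \<Rightarrow> real) \<Rightarrow> real) \<Rightarrow> (nat \<Rightarrow> real) \<Rightarrow> real" where
  "H_nr hbar mu g n f x =
     - (hbar ^ 2 / 2) * (\<Sum>j<n. partial2 f x j)
     + g * (g - hbar) * (\<Sum>j<n. \<Sum>l\<in>{Suc j..<n}. mu ^ 2 / (4 * (sinh (mu * (x j - x l) / 2)) ^ 2)) * f x"

definition W_nr_sqrt :: "real \<Rightarrow> real \<Rightarrow> real \<Rightarrow> nat \<Rightarrow> (nat \<Rightarrow> real) \<Rightarrow> real" where
  "W_nr_sqrt hbar mu g n x =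
     (\<Prod>j<n. \<Prod>k\<in>{Suc j..<n}. (4 * (sinh (mu * (x j - x k) / 2)) ^ 2) powr (g / (2 * hbar)))"

definition K_kernel :: "real \<Rightarrow> real \<Rightarrow> real \<Rightarrow> nat \<Rightarrow> nat \<Rightarrow> (nat \<Rightarrow> real) \<Rightarrow> (nat \<Rightarrow> real) \<Rightarrow> real" where
  "K_kernel hbar mu g N l x y =
     exp (mu * g * real l / (2 * hbar) * ((\<Sum>n<N - l. y n) - (\<Sum>m<N. x m)))
     / (\<Prod>m<N. \<Prod>n<N - l. (2 * cosh (mu * (x m - y n) / 2)) powr (g / hbar))"

definition Psi_nr :: "real \<Rightarrow> real \<Rightarrow> real \<Rightarrow> nat \<Rightarrow> nat \<Rightarrow> (nat \<Rightarrow> real) \<Rightarrow> (nat \<Rightarrow> real) \<Rightarrow> real" where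
  "Psi_nr hbar mu g N l x y =
     W_nr_sqrt hbar mu g N x * W_nr_sqrt hbar mu g (N - l) y * K_kernel hbar mu g N l x y"

end

theory Submission
  imports Defs
begin

text \<open>
  Off the coincidence set \<open>\<Psi>\<close> is the exponential of a sum of pair logarithms, so
  \<open>(H \<Psi>) / \<Psi> = -(hbar\<^sup>2/2) (|\<nabla> log \<Psi>|\<^sup>2 + \<Delta> log \<Psi>) + V\<close>, and the derivative of
  \<open>log \<Psi>\<close> along \<open>x\<^sub>j\<close> is \<open>g\<mu>/(2 hbar) (\<Sum>\<^sub>k coth - l - \<Sum>\<^sub>n tanh)\<close>. Squaring it and summing
  over \<open>j\<close>, the identities \<open>coth(a-b) coth(a-c) + cyclic = 1\<close> and
  \<open>coth(a-b) (tanh(a-c) - tanh(b-c)) + tanh(a-c) tanh(b-c) = 1\<close> turn every triple sum into a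
  count of index triples, and the \<open>1/sinh\<^sup>2\<close> terms cancel against the potential. \<open>\<Psi>\<close> is
  symmetric under \<open>x \<leftrightarrow> y\<close>, \<open>l \<mapsto> -l\<close>, so the \<open>y\<close>-side is the same computation; the two sides
  share all terms except a polynomial in \<open>N\<close> and \<open>N - l\<close>, and the difference of these
  polynomials is \<open>l(4l\<^sup>2 - 1)/3\<close>.
\<close>

section \<open>Hyperbolic identities\<close>

text \<open>Isabelle's division gives \<open>coth 0 = 0\<close> and \<open>1 / sinh 0 ^ 2 = 0\<close>; the diagonal terms
  \<open>k = j\<close> of the row sums below therefore vanish.\<close>

definition coth :: "real \<Rightarrow> real" where
  "coth u = cosh u / sinh u"

lemma coth_minus [simp]: "coth (- u) = - coth u"
  by (simp add: coth_def)

lemma coth_squared: "u \<noteq> 0 \<Longrightarrow> coth u ^ 2 = 1 / sinh u ^ 2 + 1"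
  using cosh_square_eq[of u] by (simp add: coth_def power_divide field_simps)

lemma exp_double_mult: "exp (2 * x :: real) = exp x * exp x"
  by (simp add: exp_add[symmetric])

lemma sinh_diff_exp: "sinh (a - b :: real) = (exp (2*a) - exp (2*b)) / (2 * exp (a + b))"
  unfolding exp_double_mult by (simp add: sinh_def exp_add exp_diff field_simps)

lemma cosh_diff_exp: "cosh (a - b :: real) = (exp (2*a) + exp (2*b)) / (2 * exp (a + b))"
  unfolding exp_double_mult by (simp add: cosh_def exp_add exp_diff field_simps)

lemma coth_diff_exp: "coth (a - b) = (exp (2*a) + exp (2*b)) / (exp (2*a) - exp (2*b))"
  unfolding coth_def sinh_diff_exp cosh_diff_exp by (simp add: divide_divide_times_eq)

lemma tanh_diff_exp: "tanh (a - b :: real) = (exp (2*a) - exp (2*b)) / (exp (2*a) + exp (2*b))"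
  unfolding tanh_def sinh_diff_exp cosh_diff_exp by (simp add: divide_divide_times_eq)

lemma coth_triple:
  assumes "a \<noteq> b" "b \<noteq> c" "a \<noteq> c"
  shows "coth (a - b) * coth (a - c) + coth (b - c) * coth (b - a) + coth (c - a) * coth (c - b) = 1"
proof -
  have "exp (2*a) \<noteq> exp (2*b)" "exp (2*b) \<noteq> exp (2*c)" "exp (2*a) \<noteq> exp (2*c)"
    using assms by simp_all
  then show ?thesis
    unfolding coth_diff_exp by (simp add: divide_simps) (simp add: algebra_simps)
qed

lemma coth_tanh_mixed:
  assumes "a \<noteq> b"
  shows "coth (a - b) * (tanh (a - c) - tanh (b - c)) + tanh (a - c) * tanh (b - c) = 1"
proof -
  have "exp (2*a) \<noteq> exp (2*b)" "exp (2*a) + exp (2*c) \<noteq> 0" "exp (2*b) + exp (2*c) \<noteq> 0"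
    using assms by (simp, metis add_pos_pos exp_gt_zero less_irrefl,
        metis add_pos_pos exp_gt_zero less_irrefl)
  then show ?thesis
    unfolding coth_diff_exp tanh_diff_exp by (simp add: divide_simps) (simp add: algebra_simps)
qed

section \<open>Row sums of antisymmetric arrays\<close>

abbreviation kron :: "nat \<Rightarrow> nat \<Rightarrow> real" where
  "kron a b \<equiv> if a = b then 1 else 0"

lemma kron_mult [simp]:
  "kron a b * x = (if a = b then x else 0)" "x * kron a b = (if a = b then x else 0)"
  by simp_all

lemma sum_if_const_cond: "(\<Sum>i\<in>A. if P then f i else 0) = (if P then sum f A else (0::real))"
  by simp

lemma sum_antisym_eq_0:
  fixes C :: "nat \<Rightarrow> nat \<Rightarrow> real"
  assumes "\<And>j k. j < N \<Longrightarrow> k < N \<Longrightarrow> C k j = - C j k"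
  shows "(\<Sum>j<N. \<Sum>k<N. C j k) = 0"
proof -
  have "(\<Sum>j<N. \<Sum>k<N. C j k) = (\<Sum>k<N. \<Sum>j<N. C j k)"
    by (rule sum.swap)
  also have "\<dots> = (\<Sum>k<N. \<Sum>j<N. - C k j)"
    by (rule sum.cong[OF refl], rule sum.cong[OF refl], rule assms) auto
  also have "\<dots> = - (\<Sum>k<N. \<Sum>j<N. C k j)"
    by (simp add: sum_negf)
  finally show ?thesis by simp
qed

lemma cyclic_product_sum:
  fixes C :: "nat \<Rightarrow> nat \<Rightarrow> real"
  assumes anti: "\<And>j k. j < N \<Longrightarrow> k < N \<Longrightarrow> C k j = - C j k"
    and triple: "\<And>j k k'. j < N \<Longrightarrow> k < N \<Longrightarrow> k' < N \<Longrightarrow> j \<noteq> k \<Longrightarrow> k \<noteq> k' \<Longrightarrow> j \<noteq> k' \<Longrightarrow>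
        C j k * C j k' + C k k' * C k j + C k' j * C k' k = 1"
    and "j < N" "k < N" "k' < N"
  shows "C j k * C j k' + C k k' * C k j + C k' j * C k' k
     = 1 - kron j k - kron k k' - kron j k' + 2 * kron j k * kron k k'
       + kron j k * (C j k')\<^sup>2 + kron k k' * (C j k)\<^sup>2 + kron j k' * (C j k)\<^sup>2"
proof -
  have diag: "C i i = 0" if "i < N" for i
    using anti[OF that that] by simp
  consider "j = k" "k = k'" | "j = k" "k \<noteq> k'" | "j \<noteq> k" "k = k'" | "j \<noteq> k" "j = k'"
    | "j \<noteq> k" "k \<noteq> k'" "j \<noteq> k'"
    by blast
  then show ?thesis
  proof cases
    case 1
    then show ?thesis using assms(3) by (simp add: diag)
  next
    case 2
    then show ?thesis using assms(3-5) anti[of k k'] by (simp add: diag power2_eq_square)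
  next
    case 3
    then show ?thesis using assms(3-5) anti[of j k] by (simp add: diag power2_eq_square)
  next
    case 4
    then show ?thesis using assms(3-5) anti[of j k] by (simp add: diag power2_eq_square)
  next
    case 5
    then show ?thesis using triple[OF assms(3-5)] by simp
  qed
qed

lemma sum_row_sums_squared:
  fixes C :: "nat \<Rightarrow> nat \<Rightarrow> real"
  assumes anti: "\<And>j k. j < N \<Longrightarrow> k < N \<Longrightarrow> C k j = - C j k"
    and triple: "\<And>j k k'. j < N \<Longrightarrow> k < N \<Longrightarrow> k' < N \<Longrightarrow> j \<noteq> k \<Longrightarrow> k \<noteq> k' \<Longrightarrow> j \<noteq> k' \<Longrightarrow>
        C j k * C j k' + C k k' * C k j + C k' j * C k' k = 1"
  shows "(\<Sum>j<N. (\<Sum>k<N. C j k)\<^sup>2)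
       = (\<Sum>j<N. \<Sum>k<N. (C j k)\<^sup>2) + real N * (real N - 1) * (real N - 2) / 3"
proof -
  define X where "X = (\<Sum>j<N. \<Sum>k<N. \<Sum>k'<N. C j k * C j k')"
  have X: "(\<Sum>j<N. (\<Sum>k<N. C j k)\<^sup>2) = X"
    unfolding X_def power2_eq_square sum_product by simp
  have X2: "(\<Sum>j<N. \<Sum>k<N. \<Sum>k'<N. C k k' * C k j) = X"
  proof -
    have "(\<Sum>j<N. \<Sum>k<N. \<Sum>k'<N. C k k' * C k j) = (\<Sum>k<N. \<Sum>j<N. \<Sum>k'<N. C k k' * C k j)"
      by (rule sum.swap)
    also have "\<dots> = (\<Sum>k<N. \<Sum>k'<N. \<Sum>j<N. C k k' * C k j)"
      by (intro sum.cong refl sum.swap)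
    finally show ?thesis unfolding X_def by (simp add: mult.commute)
  qed
  have X3: "(\<Sum>j<N. \<Sum>k<N. \<Sum>k'<N. C k' j * C k' k) = X"
  proof -
    have "(\<Sum>j<N. \<Sum>k<N. \<Sum>k'<N. C k' j * C k' k) = (\<Sum>j<N. \<Sum>k'<N. \<Sum>k<N. C k' j * C k' k)"
      by (intro sum.cong refl sum.swap)
    also have "\<dots> = (\<Sum>k'<N. \<Sum>j<N. \<Sum>k<N. C k' j * C k' k)"
      by (rule sum.swap)
    finally show ?thesis unfolding X_def by simp
  qed
  have "3 * X = (\<Sum>j<N. \<Sum>k<N. \<Sum>k'<N. C j k * C j k' + C k k' * C k j + C k' j * C k' k)"
    using X2 X3 unfolding X_def by (simp add: sum.distrib)
  also have "\<dots> = (\<Sum>j<N. \<Sum>k<N. \<Sum>k'<N. 1 - kron j k - kron k k' - kron j k' + 2 * kron j k * kron k k'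
       + kron j k * (C j k')\<^sup>2 + kron k k' * (C j k)\<^sup>2 + kron j k' * (C j k)\<^sup>2)"
    by (intro sum.cong refl cyclic_product_sum[OF anti triple]) auto
  also have "\<dots> = real N * (real N - 1) * (real N - 2) + 3 * (\<Sum>j<N. \<Sum>k<N. (C j k)\<^sup>2)"
    by (simp add: sum.distrib sum_subtractf sum_if_const_cond del: of_nat_sum)
      (simp add: sum_subtractf power2_eq_square algebra_simps sum_distrib_left)
  finally show ?thesis unfolding X by simp
qed

lemma sum_row_sums_mixed:
  fixes C T :: "nat \<Rightarrow> nat \<Rightarrow> real"
  assumes anti: "\<And>j k. j < N \<Longrightarrow> k < N \<Longrightarrow> C k j = - C j k"
    and mixed: "\<And>j k n. j < N \<Longrightarrow> k < N \<Longrightarrow> j \<noteq> k \<Longrightarrow> n < M \<Longrightarrow>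
        C j k * (T j n - T k n) + T j n * T k n = 1"
  shows "2 * (\<Sum>j<N. (\<Sum>k<N. C j k) * (\<Sum>n<M. T j n))
       = real N * (real N - 1) * real M + (\<Sum>j<N. \<Sum>n<M. (T j n)\<^sup>2) - (\<Sum>n<M. (\<Sum>j<N. T j n)\<^sup>2)"
proof -
  define Y where "Y = (\<Sum>j<N. \<Sum>k<N. \<Sum>n<M. C j k * T j n)"
  have Y: "(\<Sum>j<N. (\<Sum>k<N. C j k) * (\<Sum>n<M. T j n)) = Y"
    unfolding Y_def sum_product by simp
  have Y2: "(\<Sum>j<N. \<Sum>k<N. \<Sum>n<M. C k j * T k n) = Y"
    unfolding Y_def by (rule sum.swap)
  have Z: "(\<Sum>n<M. (\<Sum>j<N. T j n)\<^sup>2) = (\<Sum>j<N. \<Sum>k<N. \<Sum>n<M. T j n * T k n)"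
  proof -
    have "(\<Sum>n<M. (\<Sum>j<N. T j n)\<^sup>2) = (\<Sum>n<M. \<Sum>j<N. \<Sum>k<N. T j n * T k n)"
      unfolding power2_eq_square sum_product by simp
    also have "\<dots> = (\<Sum>j<N. \<Sum>n<M. \<Sum>k<N. T j n * T k n)"
      by (rule sum.swap)
    also have "\<dots> = (\<Sum>j<N. \<Sum>k<N. \<Sum>n<M. T j n * T k n)"
      by (intro sum.cong refl sum.swap)
    finally show ?thesis .
  qed
  have pointwise: "C j k * T j n + C k j * T k n + T j n * T k n = 1 - kron j k + kron j k * (T j n)\<^sup>2"
    if "j < N" "k < N" "n < M" for j k n
  proof (cases "j = k")
    case True
    then show ?thesis using anti[of j j] that by (simp add: power2_eq_square)
  next
    case False
    then show ?thesis using mixed[of j k n] anti[of j k] that by (simp add: algebra_simps)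
  qed
  have "2 * Y + (\<Sum>j<N. \<Sum>k<N. \<Sum>n<M. T j n * T k n)
      = (\<Sum>j<N. \<Sum>k<N. \<Sum>n<M. C j k * T j n + C k j * T k n + T j n * T k n)"
    using Y2 unfolding Y_def by (simp add: sum.distrib)
  also have "\<dots> = (\<Sum>j<N. \<Sum>k<N. \<Sum>n<M. 1 - kron j k + kron j k * (T j n)\<^sup>2)"
    by (intro sum.cong refl pointwise) auto
  also have "\<dots> = real N * real N * real M - real N * real M + (\<Sum>j<N. \<Sum>n<M. (T j n)\<^sup>2)"
    by (simp add: sum.distrib sum_subtractf sum_if_const_cond right_diff_distrib del: of_nat_sum)
  finally show ?thesis unfolding Y Z by (simp add: algebra_simps)
qed

definition cross_energy :: "(nat \<Rightarrow> nat \<Rightarrow> real) \<Rightarrow> nat \<Rightarrow> nat \<Rightarrow> real" where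
  "cross_energy T N M =
     (\<Sum>j<N. (\<Sum>n<M. T j n)\<^sup>2) + (\<Sum>n<M. (\<Sum>j<N. T j n)\<^sup>2) - (\<Sum>j<N. \<Sum>n<M. (T j n)\<^sup>2)"

lemma cross_energy_transpose: "cross_energy (\<lambda>n j. - T j n) M N = cross_energy T N M"
  unfolding cross_energy_def by (simp add: sum_negf sum.swap[of _ "{..<M}"])

lemma sum_sq_shifted_row_sums:
  fixes C S T :: "nat \<Rightarrow> nat \<Rightarrow> real" and c :: real
  assumes anti: "\<And>j k. j < N \<Longrightarrow> k < N \<Longrightarrow> C k j = - C j k"
    and triple: "\<And>j k k'. j < N \<Longrightarrow> k < N \<Longrightarrow> k' < N \<Longrightarrow> j \<noteq> k \<Longrightarrow> k \<noteq> k' \<Longrightarrow> j \<noteq> k' \<Longrightarrow>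
        C j k * C j k' + C k k' * C k j + C k' j * C k' k = 1"
    and sq: "\<And>j k. j < N \<Longrightarrow> k < N \<Longrightarrow> j \<noteq> k \<Longrightarrow> (C j k)\<^sup>2 = S j k + 1"
    and diag: "\<And>j. j < N \<Longrightarrow> S j j = 0"
    and mixed: "\<And>j k n. j < N \<Longrightarrow> k < N \<Longrightarrow> j \<noteq> k \<Longrightarrow> n < M \<Longrightarrow>
        C j k * (T j n - T k n) + T j n * T k n = 1"
  shows "(\<Sum>j<N. ((\<Sum>k<N. C j k) - c - (\<Sum>n<M. T j n))\<^sup>2)
       = (\<Sum>j<N. \<Sum>k<N. S j k) + (real N ^ 3 - real N) / 3 - real N * (real N - 1) * real M
         + real N * c\<^sup>2 + 2 * c * (\<Sum>j<N. \<Sum>n<M. T j n) + cross_energy T N M"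
proof -
  define P where "P j = (\<Sum>k<N. C j k)" for j
  define Q where "Q j = (\<Sum>n<M. T j n)" for j
  have sum_P: "(\<Sum>j<N. P j) = 0"
    unfolding P_def using anti by (rule sum_antisym_eq_0)
  have sum_C_sq: "(\<Sum>j<N. \<Sum>k<N. (C j k)\<^sup>2) = (\<Sum>j<N. \<Sum>k<N. S j k) + real N * (real N - 1)"
  proof -
    have "(\<Sum>j<N. \<Sum>k<N. (C j k)\<^sup>2) = (\<Sum>j<N. \<Sum>k<N. S j k + 1 - kron j k)"
    proof (intro sum.cong refl)
      fix j k assume "j \<in> {..<N}" "k \<in> {..<N}"
      then show "(C j k)\<^sup>2 = S j k + 1 - kron j k"
        using anti[of j j] by (cases "j = k") (simp_all add: sq diag)
    qed
    then show ?thesis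
      by (simp add: sum.distrib sum_subtractf algebra_simps del: of_nat_sum)
  qed
  have sum_P_sq: "(\<Sum>j<N. (P j)\<^sup>2)
      = (\<Sum>j<N. \<Sum>k<N. (C j k)\<^sup>2) + real N * (real N - 1) * (real N - 2) / 3"
    unfolding P_def using anti triple by (rule sum_row_sums_squared)
  have sum_PQ: "2 * (\<Sum>j<N. P j * Q j)
      = real N * (real N - 1) * real M + (\<Sum>j<N. \<Sum>n<M. (T j n)\<^sup>2) - (\<Sum>n<M. (\<Sum>j<N. T j n)\<^sup>2)"
    unfolding P_def Q_def using anti mixed by (rule sum_row_sums_mixed)
  have "(\<Sum>j<N. (P j - c - Q j)\<^sup>2)
      = (\<Sum>j<N. (P j)\<^sup>2) + real N * c\<^sup>2 + (\<Sum>j<N. (Q j)\<^sup>2)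
        - 2 * c * (\<Sum>j<N. P j) + 2 * c * (\<Sum>j<N. Q j) - 2 * (\<Sum>j<N. P j * Q j)"
    by (simp add: power2_eq_square algebra_simps sum.distrib sum_subtractf sum_distrib_left)
  also have "\<dots> = (\<Sum>j<N. \<Sum>k<N. S j k) + (real N ^ 3 - real N) / 3 - real N * (real N - 1) * real M
         + real N * c\<^sup>2 + 2 * c * (\<Sum>j<N. \<Sum>n<M. T j n) + cross_energy T N M"
    using sum_PQ unfolding sum_P sum_P_sq sum_C_sq cross_energy_def Q_def
    by (simp add: power3_eq_cube field_simps)
  finally show ?thesis unfolding P_def Q_def .
qed

section \<open>\<open>\<Psi>\<close> as an exponential\<close>

lemma scaled_diff_half: "mu * (a - b) / 2 = mu * a / 2 - mu * b / (2::real)"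
  by (simp add: field_simps)

lemma scaled_diff_swap: "mu * (b - a) / 2 = - (mu * (a - b) / (2::real))"
  by (simp add: field_simps)

lemma sum_upper_triangle:
  fixes F :: "nat \<Rightarrow> nat \<Rightarrow> real"
  assumes sym: "\<And>j k. F k j = F j k" and diag: "\<And>j. F j j = 0"
  shows "(\<Sum>j<n. \<Sum>k\<in>{Suc j..<n}. F j k) = (\<Sum>j<n. \<Sum>k<n. F j k) / 2"
proof (induction n)
  case 0
  then show ?case by simp
next
  case (Suc n)
  have "{Suc j..<Suc n} = insert n {Suc j..<n}" if "j < n" for j
    using that by auto
  then have "(\<Sum>j<Suc n. \<Sum>k\<in>{Suc j..<Suc n}. F j k) = (\<Sum>j<n. \<Sum>k\<in>{Suc j..<n}. F j k) + (\<Sum>j<n. F j n)"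
    by (simp add: sum.distrib)
  moreover have "(\<Sum>j<Suc n. \<Sum>k<Suc n. F j k) = (\<Sum>j<n. \<Sum>k<n. F j k) + 2 * (\<Sum>j<n. F j n)"
    by (simp add: sum.distrib diag sym[of n])
  ultimately show ?case
    using Suc.IH by simp
qed

text \<open>The logarithm of \<open>\<Psi>\<close>, with the integer \<open>l\<close> generalised to a real \<open>c\<close> and the two
  particle numbers decoupled. Each pair logarithm is summed over ordered pairs, hence the factor
  \<open>g/(4 hbar)\<close>; the diagonal terms are \<open>ln 0 = 0\<close>.\<close>

definition log_Psi :: "real \<Rightarrow> real \<Rightarrow> real \<Rightarrow> real \<Rightarrow> nat \<Rightarrow> nat \<Rightarrow> (nat \<Rightarrow> real) \<Rightarrow> (nat \<Rightarrow> real) \<Rightarrow> real" where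
  "log_Psi hbar mu g c N M x y =
     g / (4 * hbar) * (\<Sum>a<N. \<Sum>b<N. ln (4 * sinh (mu * (x a - x b) / 2) ^ 2))
   + g / (4 * hbar) * (\<Sum>a<M. \<Sum>b<M. ln (4 * sinh (mu * (y a - y b) / 2) ^ 2))
   + mu * g * c / (2 * hbar) * ((\<Sum>n<M. y n) - (\<Sum>m<N. x m))
   - g / hbar * (\<Sum>m<N. \<Sum>n<M. ln (2 * cosh (mu * (x m - y n) / 2)))"

lemma log_Psi_swap: "log_Psi hbar mu g c N M x y = log_Psi hbar mu g (- c) M N y x"
proof -
  have sym: "ln (2 * cosh (mu * (y n - x m) / 2)) = ln (2 * cosh (mu * (x m - y n) / 2))" for m n
    unfolding scaled_diff_swap[of mu "y n"] by simp
  have "(\<Sum>n<M. \<Sum>m<N. ln (2 * cosh (mu * (y n - x m) / 2)))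
      = (\<Sum>m<N. \<Sum>n<M. ln (2 * cosh (mu * (y n - x m) / 2)))"
    by (rule sum.swap)
  also have "\<dots> = (\<Sum>m<N. \<Sum>n<M. ln (2 * cosh (mu * (x m - y n) / 2)))"
    by (intro sum.cong refl) (rule sym)
  finally show ?thesis
    unfolding log_Psi_def by (simp add: algebra_simps add_divide_distrib[symmetric])
qed

lemma W_nr_sqrt_eq_exp:
  assumes "mu \<noteq> 0" and "inj_on z {..<n}"
  shows "W_nr_sqrt hbar mu g n z = exp (g / (4 * hbar) * (\<Sum>a<n. \<Sum>b<n. ln (4 * sinh (mu * (z a - z b) / 2) ^ 2)))"
proof -
  have pos: "4 * sinh (mu * (z a - z b) / 2) ^ 2 > 0" if "a < n" "b \<in> {Suc a..<n}" for a b
  proof -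
    have "z a \<noteq> z b"
      using that inj_onD[OF assms(2), of a b] by auto
    then show ?thesis
      using assms(1) by simp
  qed
  have "W_nr_sqrt hbar mu g n z
      = exp (\<Sum>a<n. \<Sum>b\<in>{Suc a..<n}. g / (2 * hbar) * ln (4 * sinh (mu * (z a - z b) / 2) ^ 2))"
    unfolding W_nr_sqrt_def exp_sum[OF finite_lessThan] exp_sum[OF finite_atLeastLessThan]
  proof (rule prod.cong[OF refl], rule prod.cong[OF refl])
    fix a b assume "a \<in> {..<n}" "b \<in> {Suc a..<n}"
    then show "(4 * sinh (mu * (z a - z b) / 2) ^ 2) powr (g / (2 * hbar))
        = exp (g / (2 * hbar) * ln (4 * sinh (mu * (z a - z b) / 2) ^ 2))"
      using pos by (simp add: powr_def)
  qed
  also have "(\<Sum>a<n. \<Sum>b\<in>{Suc a..<n}. g / (2 * hbar) * ln (4 * sinh (mu * (z a - z b) / 2) ^ 2))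
      = g / (4 * hbar) * (\<Sum>a<n. \<Sum>b<n. ln (4 * sinh (mu * (z a - z b) / 2) ^ 2))"
  proof -
    have sym: "ln (4 * sinh (mu * (z b - z a) / 2) ^ 2) = ln (4 * sinh (mu * (z a - z b) / 2) ^ 2)" for a b
      unfolding scaled_diff_swap[of mu "z b"] by simp
    have half: "(\<Sum>a<n. \<Sum>b\<in>{Suc a..<n}. ln (4 * sinh (mu * (z a - z b) / 2) ^ 2))
        = (\<Sum>a<n. \<Sum>b<n. ln (4 * sinh (mu * (z a - z b) / 2) ^ 2)) / 2"
      by (rule sum_upper_triangle) (rule sym, simp)
    show ?thesis
      by (simp only: sum_distrib_left[symmetric] half) simp
  qed
  finally show ?thesis .
qed

lemma K_kernel_eq_exp:
  "K_kernel hbar mu g N l x y = exp (mu * g * real l / (2 * hbar) * ((\<Sum>n<N - l. y n) - (\<Sum>m<N. x m))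
     - g / hbar * (\<Sum>m<N. \<Sum>n<N - l. ln (2 * cosh (mu * (x m - y n) / 2))))"
proof -
  have "(\<Prod>m<N. \<Prod>n<N - l. (2 * cosh (mu * (x m - y n) / 2)) powr (g / hbar))
      = exp (g / hbar * (\<Sum>m<N. \<Sum>n<N - l. ln (2 * cosh (mu * (x m - y n) / 2))))"
    by (simp add: powr_def exp_sum sum_distrib_left)
  then show ?thesis
    unfolding K_kernel_def by (simp add: exp_diff)
qed

lemma Psi_nr_eq_exp:
  assumes "mu \<noteq> 0" and "inj_on x {..<N}" and "inj_on y {..<N - l}"
  shows "Psi_nr hbar mu g N l x y = exp (log_Psi hbar mu g (real l) N (N - l) x y)"
  unfolding Psi_nr_def W_nr_sqrt_eq_exp[OF assms(1,2)] W_nr_sqrt_eq_exp[OF assms(1,3)] K_kernel_eq_exp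
    log_Psi_def
  by (simp add: exp_add[symmetric] exp_diff)

section \<open>Partial derivatives of \<open>log \<Psi>\<close>\<close>

lemma has_real_derivative_fun_upd_apply:
  fixes z :: "nat \<Rightarrow> real"
  shows "((\<lambda>t. (z(j := t)) a) has_real_derivative kron a j) (at s)"
  by (cases "a = j") (auto intro!: derivative_eq_intros)

lemma pair_term_has_derivative:
  fixes F F' :: "real \<Rightarrow> real" and z :: "nat \<Rightarrow> real"
  assumes F: "\<And>u. u \<noteq> 0 \<Longrightarrow> (F has_real_derivative F' u) (at u)"
    and inj: "inj_on z {..<n}" and "a < n" "b < n"
  shows "((\<lambda>t. F ((z(j := t)) a - (z(j := t)) b))
           has_real_derivative F' (z a - z b) * (kron a j - kron b j)) (at (z j))"
proof (cases "a = b")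
  case True
  then show ?thesis by simp
next
  case False
  then have "z a - z b \<noteq> 0"
    using assms(3,4) inj_onD[OF inj, of a b] by auto
  then have "(F has_real_derivative F' (z a - z b)) (at ((z(j := z j)) a - (z(j := z j)) b))"
    using F by simp
  from DERIV_chain2[OF this DERIV_diff[OF has_real_derivative_fun_upd_apply has_real_derivative_fun_upd_apply]]
  show ?thesis by simp
qed

lemma pair_sum_has_derivative:
  fixes F F' :: "real \<Rightarrow> real" and z :: "nat \<Rightarrow> real"
  assumes F: "\<And>u. u \<noteq> 0 \<Longrightarrow> (F has_real_derivative F' u) (at u)"
    and odd: "\<And>u. F' (- u) = - F' u"
    and inj: "inj_on z {..<n}" and j: "j < n"
  shows "((\<lambda>t. \<Sum>a<n. \<Sum>b<n. F ((z(j := t)) a - (z(j := t)) b))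
           has_real_derivative 2 * (\<Sum>b<n. F' (z j - z b))) (at (z j))"
proof -
  have "((\<lambda>t. \<Sum>a<n. \<Sum>b<n. F ((z(j := t)) a - (z(j := t)) b))
      has_real_derivative (\<Sum>a<n. \<Sum>b<n. F' (z a - z b) * (kron a j - kron b j))) (at (z j))"
    by (intro DERIV_sum pair_term_has_derivative[OF F inj]) auto
  moreover have "(\<Sum>a<n. \<Sum>b<n. F' (z a - z b) * (kron a j - kron b j)) = 2 * (\<Sum>b<n. F' (z j - z b))"
  proof -
    have "(\<Sum>a<n. F' (z a - z j)) = - (\<Sum>a<n. F' (z j - z a))"
      using odd[of "z j - z _"] by (simp add: sum_negf[symmetric])
    then show ?thesis
      using j by (simp add: right_diff_distrib sum_subtractf sum_if_const_cond)
  qed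
  ultimately show ?thesis by simp
qed

lemma row_sum_has_derivative:
  fixes G G' :: "real \<Rightarrow> real" and z :: "nat \<Rightarrow> real"
  assumes G: "\<And>u. u \<noteq> 0 \<Longrightarrow> (G has_real_derivative G' u) (at u)" and G'_0: "G' 0 = 0"
    and inj: "inj_on z {..<n}" and j: "j < n"
  shows "((\<lambda>t. \<Sum>b<n. G ((z(j := t)) j - (z(j := t)) b))
           has_real_derivative (\<Sum>b<n. G' (z j - z b))) (at (z j))"
proof -
  have "((\<lambda>t. \<Sum>b<n. G ((z(j := t)) j - (z(j := t)) b))
      has_real_derivative (\<Sum>b<n. G' (z j - z b) * (kron j j - kron b j))) (at (z j))"
    using j by (intro DERIV_sum pair_term_has_derivative[OF G inj]) auto
  moreover have "(\<Sum>b<n. G' (z j - z b) * (kron j j - kron b j)) = (\<Sum>b<n. G' (z j - z b))"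
    using j G'_0 by (simp add: right_diff_distrib sum_subtractf)
  ultimately show ?thesis by simp
qed

lemma has_real_derivative_ln_sinh_sq:
  assumes "mu * u \<noteq> 0"
  shows "((\<lambda>u. ln (4 * sinh (mu * u / 2) ^ 2)) has_real_derivative mu * coth (mu * u / 2)) (at u)"
proof -
  have "sinh (mu * u / 2) \<noteq> 0"
    using assms by simp
  then have "0 < sinh (mu * u / 2) * sinh (mu * u / 2)"
    by (metis not_real_square_gt_zero)
  then show ?thesis
    by (auto intro!: derivative_eq_intros simp: coth_def power2_eq_square field_simps)
qed

lemma has_real_derivative_ln_cosh:
  "((\<lambda>u. ln (2 * cosh (mu * u / 2))) has_real_derivative mu / 2 * tanh (mu * u / 2)) (at u)"
  by (auto intro!: derivative_eq_intros simp: tanh_def field_simps add_pos_pos)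

lemma has_real_derivative_coth_scaled:
  assumes "mu * u \<noteq> 0"
  shows "((\<lambda>u. coth (mu * u / 2)) has_real_derivative - (mu / 2) * (1 / sinh (mu * u / 2) ^ 2)) (at u)"
  unfolding coth_def using assms cosh_square_eq[of "mu * u / 2"]
  by (auto intro!: derivative_eq_intros simp: power2_eq_square field_simps)

definition log_Psi_dx :: "real \<Rightarrow> real \<Rightarrow> real \<Rightarrow> real \<Rightarrow> nat \<Rightarrow> nat \<Rightarrow> (nat \<Rightarrow> real) \<Rightarrow> (nat \<Rightarrow> real) \<Rightarrow> nat \<Rightarrow> real" where
  "log_Psi_dx hbar mu g c N M x y j = g * mu / (2 * hbar) *
     ((\<Sum>b<N. coth (mu * (x j - x b) / 2)) - c - (\<Sum>n<M. tanh (mu * (x j - y n) / 2)))"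

definition log_Psi_dxx :: "real \<Rightarrow> real \<Rightarrow> real \<Rightarrow> nat \<Rightarrow> nat \<Rightarrow> (nat \<Rightarrow> real) \<Rightarrow> (nat \<Rightarrow> real) \<Rightarrow> nat \<Rightarrow> real" where
  "log_Psi_dxx hbar mu g N M x y j = - (g * mu\<^sup>2 / (4 * hbar)) *
     ((\<Sum>b<N. 1 / sinh (mu * (x j - x b) / 2) ^ 2) + (\<Sum>n<M. 1 - tanh (mu * (x j - y n) / 2) ^ 2))"

lemma log_Psi_has_derivative:
  assumes mu: "mu \<noteq> 0" and inj: "inj_on x {..<N}" and j: "j < N"
  shows "((\<lambda>t. log_Psi hbar mu g c N M (x(j := t)) y)
           has_real_derivative log_Psi_dx hbar mu g c N M x y j) (at (x j))"
proof -
  have pairs: "((\<lambda>t. \<Sum>a<N. \<Sum>b<N. ln (4 * sinh (mu * ((x(j := t)) a - (x(j := t)) b) / 2) ^ 2))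
      has_real_derivative 2 * (\<Sum>b<N. mu * coth (mu * (x j - x b) / 2))) (at (x j))"
    using mu by (intro pair_sum_has_derivative[OF _ _ inj j] has_real_derivative_ln_sinh_sq) auto
  have linear: "((\<lambda>t. \<Sum>m<N. (x(j := t)) m) has_real_derivative 1) (at (x j))"
  proof -
    have "((\<lambda>t. \<Sum>m<N. (x(j := t)) m) has_real_derivative (\<Sum>m<N. kron m j)) (at (x j))"
      by (intro DERIV_sum has_real_derivative_fun_upd_apply)
    then show ?thesis
      using j by simp
  qed
  have cross: "((\<lambda>t. \<Sum>m<N. \<Sum>n<M. ln (2 * cosh (mu * ((x(j := t)) m - y n) / 2)))
      has_real_derivative mu / 2 * (\<Sum>n<M. tanh (mu * (x j - y n) / 2))) (at (x j))"
  proof -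
    have "((\<lambda>t. ln (2 * cosh (mu * ((x(j := t)) m - y n) / 2)))
        has_real_derivative mu / 2 * tanh (mu * (x m - y n) / 2) * kron m j) (at (x j))" for m n
    proof -
      have "((\<lambda>t. (x(j := t)) m - y n) has_real_derivative kron m j) (at (x j))"
        using DERIV_diff[OF has_real_derivative_fun_upd_apply DERIV_const] by simp
      from DERIV_chain2[OF has_real_derivative_ln_cosh this] show ?thesis
        by simp
    qed
    then have "((\<lambda>t. \<Sum>m<N. \<Sum>n<M. ln (2 * cosh (mu * ((x(j := t)) m - y n) / 2)))
        has_real_derivative (\<Sum>m<N. \<Sum>n<M. mu / 2 * tanh (mu * (x m - y n) / 2) * kron m j)) (at (x j))"
      by (intro DERIV_sum)
    then show ?thesis
      using j by (simp add: sum_if_const_cond sum_distrib_left mult.assoc)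
  qed
  show ?thesis
    unfolding log_Psi_def
    by (rule DERIV_cong[OF DERIV_diff[OF DERIV_add[OF DERIV_add[OF DERIV_cmult[OF pairs] DERIV_const]
          DERIV_cmult[OF DERIV_diff[OF DERIV_const linear]]] DERIV_cmult[OF cross]]])
      (simp add: log_Psi_dx_def sum_distrib_left[symmetric] field_simps,
        simp add: add_divide_distrib[symmetric] diff_divide_distrib[symmetric])
qed

lemma log_Psi_dx_has_derivative:
  assumes mu: "mu \<noteq> 0" and inj: "inj_on x {..<N}" and j: "j < N"
  shows "((\<lambda>t. log_Psi_dx hbar mu g c N M (x(j := t)) y j)
           has_real_derivative log_Psi_dxx hbar mu g N M x y j) (at (x j))"
proof -
  have rows: "((\<lambda>t. \<Sum>b<N. coth (mu * ((x(j := t)) j - (x(j := t)) b) / 2))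
      has_real_derivative - (mu / 2) * (\<Sum>b<N. 1 / sinh (mu * (x j - x b) / 2) ^ 2)) (at (x j))"
    unfolding sum_distrib_left
    using mu by (intro row_sum_has_derivative[OF _ _ inj j] has_real_derivative_coth_scaled) auto
  have tanhs: "((\<lambda>t. \<Sum>n<M. tanh (mu * ((x(j := t)) j - y n) / 2))
      has_real_derivative mu / 2 * (\<Sum>n<M. 1 - tanh (mu * (x j - y n) / 2) ^ 2)) (at (x j))"
    unfolding fun_upd_same sum_distrib_left by (auto intro!: derivative_eq_intros simp: mult.commute)
  show ?thesis
    unfolding log_Psi_dx_def
    by (rule DERIV_cong[OF DERIV_cmult[OF DERIV_diff[OF DERIV_diff[OF rows DERIV_const] tanhs]]])
      (simp add: log_Psi_dxx_def field_simps power2_eq_square, simp add: minus_divide_left)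
qed

lemma partial2_eq_exp:
  fixes f \<phi> \<phi>' \<phi>'' :: "(nat \<Rightarrow> real) \<Rightarrow> real"
  assumes S: "open S" "x j \<in> S"
    and f: "\<And>s. s \<in> S \<Longrightarrow> f (x(j := s)) = exp (\<phi> (x(j := s)))"
    and d1: "\<And>s. s \<in> S \<Longrightarrow> ((\<lambda>t. \<phi> (x(j := t))) has_real_derivative \<phi>' (x(j := s))) (at s)"
    and d2: "\<And>s. s \<in> S \<Longrightarrow> ((\<lambda>t. \<phi>' (x(j := t))) has_real_derivative \<phi>'' (x(j := s))) (at s)"
  shows "partial2 f x j = f x * ((\<phi>' x)\<^sup>2 + \<phi>'' x)"
proof -
  have first: "deriv (\<lambda>s. f (x(j := s))) s = exp (\<phi> (x(j := s))) * \<phi>' (x(j := s))" if "s \<in> S" for s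
  proof -
    have "((\<lambda>s. f (x(j := s))) has_real_derivative exp (\<phi> (x(j := s))) * \<phi>' (x(j := s))) (at s)"
      by (rule has_field_derivative_transform_within_open[OF DERIV_chain2[OF DERIV_exp d1[OF that]] S(1) that])
        (simp add: f)
    then show ?thesis
      by (rule DERIV_imp_deriv)
  qed
  have "((\<lambda>t. exp (\<phi> (x(j := t))) * \<phi>' (x(j := t))) has_real_derivative
      exp (\<phi> x) * \<phi>' x * \<phi>' x + exp (\<phi> x) * \<phi>'' x) (at (x j))"
    using DERIV_mult[OF DERIV_chain2[OF DERIV_exp d1[OF S(2)]] d2[OF S(2)]] by (simp add: mult.commute)
  then have "((\<lambda>t. deriv (\<lambda>s. f (x(j := s))) t) has_real_derivative
      exp (\<phi> x) * \<phi>' x * \<phi>' x + exp (\<phi> x) * \<phi>'' x) (at (x j))"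
    by (rule has_field_derivative_transform_within_open[OF _ S]) (simp add: first)
  moreover have "f x = exp (\<phi> x)"
    using f[OF S(2)] by simp
  ultimately show ?thesis
    unfolding partial2_def by (simp add: DERIV_imp_deriv power2_eq_square algebra_simps)
qed

lemma inj_on_fun_upd_nhd:
  fixes x :: "nat \<Rightarrow> real"
  assumes inj: "inj_on x {..<n}" and j: "j < n"
  obtains S where "open S" "x j \<in> S" "\<And>s. s \<in> S \<Longrightarrow> inj_on (x(j := s)) {..<n}"
proof
  let ?S = "- x ` ({..<n} - {j})"
  show "open ?S"
    by (intro open_Compl finite_imp_closed) simp
  show "x j \<in> ?S"
    using inj_onD[OF inj] j by auto
  show "inj_on (x(j := s)) {..<n}" if "s \<in> ?S" for s
    using inj that unfolding inj_on_def by auto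
qed

lemma partial2_exp_log_Psi:
  fixes f :: "(nat \<Rightarrow> real) \<Rightarrow> real"
  assumes mu: "mu \<noteq> 0" and inj: "inj_on x {..<N}" and j: "j < N"
    and f: "\<And>x'. inj_on x' {..<N} \<Longrightarrow> f x' = exp (log_Psi hbar mu g c N M x' y)"
  shows "partial2 f x j
       = f x * ((log_Psi_dx hbar mu g c N M x y j)\<^sup>2 + log_Psi_dxx hbar mu g N M x y j)"
proof -
  obtain S where S: "open S" "x j \<in> S" and inj_S: "\<And>s. s \<in> S \<Longrightarrow> inj_on (x(j := s)) {..<N}"
    using inj_on_fun_upd_nhd[OF inj j] by blast
  show ?thesis
  proof (rule partial2_eq_exp[where x = x and j = j and \<phi> = "\<lambda>x'. log_Psi hbar mu g c N M x' y"
        and \<phi>' = "\<lambda>x'. log_Psi_dx hbar mu g c N M x' y j" and \<phi>'' = "\<lambda>x'. log_Psi_dxx hbar mu g N M x' y j",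
        OF S])
    fix s assume s: "s \<in> S"
    show "f (x(j := s)) = exp (log_Psi hbar mu g c N M (x(j := s)) y)"
      using f[OF inj_S[OF s]] .
    show "((\<lambda>t. log_Psi hbar mu g c N M (x(j := t)) y)
        has_real_derivative log_Psi_dx hbar mu g c N M (x(j := s)) y j) (at s)"
      using log_Psi_has_derivative[OF mu inj_S[OF s] j] by simp
    show "((\<lambda>t. log_Psi_dx hbar mu g c N M (x(j := t)) y j)
        has_real_derivative log_Psi_dxx hbar mu g N M (x(j := s)) y j) (at s)"
      using log_Psi_dx_has_derivative[OF mu inj_S[OF s] j] by simp
  qed
qed

section \<open>The Hamiltonian applied to \<open>\<Psi>\<close>\<close>

lemma sum_sq_coth_tanh_rows:
  fixes x y :: "nat \<Rightarrow> real"
  assumes mu: "mu \<noteq> 0" and inj: "inj_on x {..<N}"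
  shows "(\<Sum>j<N. ((\<Sum>k<N. coth (mu * (x j - x k) / 2)) - c - (\<Sum>n<M. tanh (mu * (x j - y n) / 2)))\<^sup>2)
       = (\<Sum>j<N. \<Sum>k<N. 1 / sinh (mu * (x j - x k) / 2) ^ 2)
         + (real N ^ 3 - real N) / 3 - real N * (real N - 1) * real M + real N * c\<^sup>2
         + 2 * c * (\<Sum>j<N. \<Sum>n<M. tanh (mu * (x j - y n) / 2))
         + cross_energy (\<lambda>j n. tanh (mu * (x j - y n) / 2)) N M"
proof -
  define w where "w j = mu * x j / 2" for j
  have w_ne: "w j \<noteq> w k" if "j < N" "k < N" "j \<noteq> k" for j k
    using mu inj_onD[OF inj, of j k] that by (auto simp: w_def)
  have "(\<Sum>j<N. ((\<Sum>k<N. coth (w j - w k)) - c - (\<Sum>n<M. tanh (w j - mu * y n / 2)))\<^sup>2)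
       = (\<Sum>j<N. \<Sum>k<N. 1 / sinh (w j - w k) ^ 2)
         + (real N ^ 3 - real N) / 3 - real N * (real N - 1) * real M + real N * c\<^sup>2
         + 2 * c * (\<Sum>j<N. \<Sum>n<M. tanh (w j - mu * y n / 2))
         + cross_energy (\<lambda>j n. tanh (w j - mu * y n / 2)) N M"
  proof (rule sum_sq_shifted_row_sums)
    show "coth (w k - w j) = - coth (w j - w k)" for j k
      by (metis coth_minus minus_diff_eq)
    show "coth (w j - w k) * coth (w j - w k') + coth (w k - w k') * coth (w k - w j)
        + coth (w k' - w j) * coth (w k' - w k) = 1"
      if "j < N" "k < N" "k' < N" "j \<noteq> k" "k \<noteq> k'" "j \<noteq> k'" for j k k'
      using that by (intro coth_triple w_ne)
    show "(coth (w j - w k))\<^sup>2 = 1 / sinh (w j - w k) ^ 2 + 1" if "j < N" "k < N" "j \<noteq> k" for j k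
      using coth_squared w_ne[OF that] by simp
    show "1 / sinh (w j - w j) ^ 2 = 0" for j
      by simp
    show "coth (w j - w k) * (tanh (w j - mu * y n / 2) - tanh (w k - mu * y n / 2))
        + tanh (w j - mu * y n / 2) * tanh (w k - mu * y n / 2) = 1"
      if "j < N" "k < N" "j \<noteq> k" for j k n
      using that by (intro coth_tanh_mixed w_ne)
  qed
  then show ?thesis
    by (simp add: w_def scaled_diff_half)
qed

lemma H_nr_exp_log_Psi:
  fixes f :: "(nat \<Rightarrow> real) \<Rightarrow> real" and x y :: "nat \<Rightarrow> real"
  assumes hbar: "hbar \<noteq> 0" and mu: "mu \<noteq> 0" and inj: "inj_on x {..<N}"
    and f: "\<And>x'. inj_on x' {..<N} \<Longrightarrow> f x' = exp (log_Psi hbar mu g c N M x' y)"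
  shows "H_nr hbar mu g N f x = mu\<^sup>2 / 8 * f x *
     (g * hbar * (\<Sum>j<N. \<Sum>n<M. 1 - tanh (mu * (x j - y n) / 2) ^ 2)
      - g\<^sup>2 * ((real N ^ 3 - real N) / 3 - real N * (real N - 1) * real M + real N * c\<^sup>2
          + 2 * c * (\<Sum>j<N. \<Sum>n<M. tanh (mu * (x j - y n) / 2))
          + cross_energy (\<lambda>j n. tanh (mu * (x j - y n) / 2)) N M))"
proof -
  define A where "A j = (\<Sum>k<N. coth (mu * (x j - x k) / 2)) - c - (\<Sum>n<M. tanh (mu * (x j - y n) / 2))" for j
  define S where "S = (\<Sum>j<N. \<Sum>k<N. 1 / sinh (mu * (x j - x k) / 2) ^ 2)"
  define Z where "Z = (\<Sum>j<N. \<Sum>n<M. 1 - tanh (mu * (x j - y n) / 2) ^ 2)"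
  have laplacian: "(\<Sum>j<N. partial2 f x j)
      = f x * ((g * mu / (2 * hbar))\<^sup>2 * (\<Sum>j<N. (A j)\<^sup>2) - g * mu\<^sup>2 / (4 * hbar) * (S + Z))"
  proof -
    have "(\<Sum>j<N. partial2 f x j) = (\<Sum>j<N. f x * ((g * mu / (2 * hbar))\<^sup>2 * (A j)\<^sup>2
        - g * mu\<^sup>2 / (4 * hbar) * ((\<Sum>k<N. 1 / sinh (mu * (x j - x k) / 2) ^ 2)
            + (\<Sum>n<M. 1 - tanh (mu * (x j - y n) / 2) ^ 2))))"
      by (intro sum.cong refl)
        (simp add: partial2_exp_log_Psi[OF mu inj _ f] log_Psi_dx_def log_Psi_dxx_def A_def
          power_mult_distrib power_divide)
    then show ?thesis
      unfolding S_def Z_def by (simp add: sum_distrib_left sum.distrib sum_subtractf right_diff_distrib distrib_left)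
  qed
  have potential: "(\<Sum>j<N. \<Sum>l\<in>{Suc j..<N}. mu ^ 2 / (4 * sinh (mu * (x j - x l) / 2) ^ 2)) = mu\<^sup>2 / 8 * S"
  proof -
    have "(\<Sum>j<N. \<Sum>l\<in>{Suc j..<N}. mu ^ 2 / (4 * sinh (mu * (x j - x l) / 2) ^ 2))
        = (\<Sum>j<N. \<Sum>l<N. mu ^ 2 / (4 * sinh (mu * (x j - x l) / 2) ^ 2)) / 2"
    proof (rule sum_upper_triangle)
      show "mu ^ 2 / (4 * sinh (mu * (x k - x j) / 2) ^ 2) = mu ^ 2 / (4 * sinh (mu * (x j - x k) / 2) ^ 2)" for j k
        unfolding scaled_diff_swap[of mu "x k"] by simp
    qed simp
    moreover have "(\<Sum>j<N. \<Sum>l<N. mu ^ 2 / (4 * sinh (mu * (x j - x l) / 2) ^ 2)) = mu\<^sup>2 / 4 * S"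
      unfolding S_def sum_distrib_left by simp
    ultimately show ?thesis
      by simp
  qed
  define E where "E = (real N ^ 3 - real N) / 3 - real N * (real N - 1) * real M + real N * c\<^sup>2
          + 2 * c * (\<Sum>j<N. \<Sum>n<M. tanh (mu * (x j - y n) / 2))
          + cross_energy (\<lambda>j n. tanh (mu * (x j - y n) / 2)) N M"
  have sum_sq: "(\<Sum>j<N. (A j)\<^sup>2) = S + E"
    unfolding A_def S_def E_def sum_sq_coth_tanh_rows[OF mu inj] by simp
  show ?thesis
    unfolding H_nr_def laplacian potential sum_sq Z_def[symmetric] E_def[symmetric]
    using hbar by (simp add: field_simps power2_eq_square)
qed

lemma tanh_scaled_diff_swap: "tanh (mu * (b - a) / 2) = - tanh (mu * (a - b) / (2::real))"
  unfolding scaled_diff_swap[of mu b] by simp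

lemma H_nr_Psi_nr_x:
  assumes "hbar \<noteq> 0" and "mu \<noteq> 0" and "inj_on x {..<N}" and "inj_on y {..<N - l}"
  shows "H_nr hbar mu g N (\<lambda>x'. Psi_nr hbar mu g N l x' y) x = mu\<^sup>2 / 8 * Psi_nr hbar mu g N l x y *
     (g * hbar * (\<Sum>j<N. \<Sum>n<N - l. 1 - tanh (mu * (x j - y n) / 2) ^ 2)
      - g\<^sup>2 * ((real N ^ 3 - real N) / 3 - real N * (real N - 1) * real (N - l) + real N * (real l)\<^sup>2
          + 2 * real l * (\<Sum>j<N. \<Sum>n<N - l. tanh (mu * (x j - y n) / 2))
          + cross_energy (\<lambda>j n. tanh (mu * (x j - y n) / 2)) N (N - l)))"
  using assms(2,4) by (intro H_nr_exp_log_Psi[OF assms(1-3)] Psi_nr_eq_exp)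

lemma H_nr_Psi_nr_y:
  assumes "hbar \<noteq> 0" and "mu \<noteq> 0" and "inj_on x {..<N}" and "inj_on y {..<N - l}"
  shows "H_nr hbar mu g (N - l) (\<lambda>y'. Psi_nr hbar mu g N l x y') y = mu\<^sup>2 / 8 * Psi_nr hbar mu g N l x y *
     (g * hbar * (\<Sum>j<N. \<Sum>n<N - l. 1 - tanh (mu * (x j - y n) / 2) ^ 2)
      - g\<^sup>2 * ((real (N - l) ^ 3 - real (N - l)) / 3 - real (N - l) * (real (N - l) - 1) * real N
          + real (N - l) * (real l)\<^sup>2
          + 2 * real l * (\<Sum>j<N. \<Sum>n<N - l. tanh (mu * (x j - y n) / 2))
          + cross_energy (\<lambda>j n. tanh (mu * (x j - y n) / 2)) N (N - l)))"
proof -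
  have Psi_y: "Psi_nr hbar mu g N l x y' = exp (log_Psi hbar mu g (- real l) (N - l) N y' x)"
    if "inj_on y' {..<N - l}" for y'
    using Psi_nr_eq_exp[OF assms(2,3) that] log_Psi_swap[of hbar mu g "real l" N "N - l" x y'] by simp
  have swap: "(\<Sum>n<N - l. \<Sum>j<N. F (tanh (mu * (y n - x j) / 2)))
      = (\<Sum>j<N. \<Sum>n<N - l. F (- tanh (mu * (x j - y n) / 2)))" for F :: "real \<Rightarrow> real"
    by (subst sum.swap) (intro sum.cong refl arg_cong[of _ _ F] tanh_scaled_diff_swap)
  have "(\<lambda>n j. tanh (mu * (y n - x j) / 2)) = (\<lambda>n j. - tanh (mu * (x j - y n) / 2))"
    by (intro ext tanh_scaled_diff_swap)
  then have "cross_energy (\<lambda>n j. tanh (mu * (y n - x j) / 2)) (N - l) N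
      = cross_energy (\<lambda>j n. tanh (mu * (x j - y n) / 2)) N (N - l)"
    by (simp only: cross_energy_transpose)
  with H_nr_exp_log_Psi[OF assms(1,2,4) Psi_y]
  show ?thesis
    using swap[of "\<lambda>t. t"] swap[of "\<lambda>t. 1 - t\<^sup>2"] by (simp add: sum_negf)
qed

theorem corollary4p2:
  fixes hbar mu g :: real and N l :: nat and x y :: "nat \<Rightarrow> real"
  assumes "hbar > 0" and "mu > 0" and "g > 0"
    and "l \<le> N"
    and "inj_on x {..<N}" and "inj_on y {..<N - l}"
  shows "H_nr hbar mu g N (\<lambda>x'. Psi_nr hbar mu g N l x' y) x
         - H_nr hbar mu g (N - l) (\<lambda>y'. Psi_nr hbar mu g N l x y') y
         = - (mu ^ 2 * g ^ 2 / 24) * real l * (4 * (real l) ^ 2 - 1) * Psi_nr hbar mu g N l x y"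
proof -
  have hbar: "hbar \<noteq> 0" and mu: "mu \<noteq> 0"
    using assms(1,2) by auto
  define M where "M = N - l"
  have N: "real N = real M + real l"
    using assms(4) by (simp add: M_def)
  txt \<open>What remains is \<open>((N\<^sup>3 - N)/3 - N(N-1)M + N l\<^sup>2) - ((M\<^sup>3 - M)/3 - M(M-1)N + M l\<^sup>2)
    = l(4l\<^sup>2 - 1)/3\<close> for \<open>N = M + l\<close>.\<close>
  show ?thesis
    unfolding H_nr_Psi_nr_x[OF hbar mu assms(5,6)] H_nr_Psi_nr_y[OF hbar mu assms(5,6)]
    unfolding M_def[symmetric]
    by (simp add: N field_simps power2_eq_square power3_eq_cube)
qed

end
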